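(* Let $X$ be a finite $T_0$ topological space, $\mathcal V$ a multivector field on $X$ with $X$ invariant, and $\mathcal M=\{M_p\mid p\in\mathbb P\}$ an indexed family of mutually disjoint subsets of $X$. The following are equivalent: (i) $\mathcal M$ is a Morse decomposition of $X$; (ii) each $M_p$ is a saturated isolated invariant subset of $X$, and $\mathbb P$ admits a partial order $\le$ such that for every essential solution $\gamma$ in $X$ there exist $p,q\in\mathbb P$ with $p\ge q$, $\alpha(\gamma)\subset M_p$ and $\omega(\gamma)\subset M_q$; (iii) each $M_p$ is an isolated invariant subset of $X$, and $\mathbb P$ admits a partial order $\le$ such that for every essential solution $\gamma$ in $X$ either $\operatorname{im}\gamma\subset M_p$ for some $p\in\mathbb P$, or there exist $p,q\in\mathbb P$ with $p>q$, $\alpha(\gamma)\subset M_p$ and $\omega(\gamma)\subset M_q$. In particular, every Morse set in a Morse decomposition is saturated and isolated.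
   Context: Notation: $\operatorname{cl}$ is closure; $A\subset X$ is locally closed if $\operatorname{cl}A\setminus A$ is closed. A multivector field $\mathcal V$ on $X$ is a partition of $X$ into locally closed sets (multivectors); $[x]_{\mathcal V}$ is the multivector containing $x$. A multivector $V$ is critical if $H(\operatorname{cl}V,\operatorname{cl}V\setminus V)$ (relative singular homology) is nontrivial, regular otherwise. $A$ is $\mathcal V$-compatible if it is a union of multivectors; $\langle A\rangle_{\mathcal V}$ is the smallest locally closed $\mathcal V$-compatible set containing $A$. $\Pi_{\mathcal V}(x)=\operatorname{cl}\{x\}\cup[x]_{\mathcal V}$. A solution is a partial map $\gamma:\mathbb Z\nrightarrow X$ with domain an integer interval and $\gamma(t+1)\in\Pi_{\mathcal V}(\gamma(t))$; a path has finite domain; a full solution has domain $\mathbb Z$. $\alpha(\gamma)=\langle\bigcap_{t\le0}\gamma((-\infty,t])\rangle_{\mathcal V}$, $\omega(\gamma)=\langle\bigcap_{t\ge0}\gamma([t,\infty))\rangle_{\mathcal V}$. A full solution is essential unless $\alpha(\gamma)$ or $\omega(\gamma)$ lies in a single regular multivector; an essential solution in $A$ is one with image in $A$. $\operatorname{Inv}S$ is the set of $x\in S$ with an essential solution $\gamma$ in $S$, $\gamma(0)=x$; $S$ is invariant if $\operatorname{Inv}S=S$. An invariant $S$ is isolated invariant if there is a closed $N\supset\Pi_{\mathcal V}(S)$ such that every path in $N$ with endpoints in $S$ has image in $S$. A full solution is a link from $S_1$ to $S_2$ if $\alpha(\gamma)\cap S_1\ne\emptyset\ne\omega(\gamma)\cap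 S_2$. A Morse predecomposition of $X$ is an indexed family of mutually disjoint isolated invariant subsets $\{M_p\mid p\in\mathbb P\}$ such that every essential solution in $X$ is a link from some $M_p$ to some $M_q$. A preorder $\le$ on $\mathbb P$ is admissible if a link from $M_p$ to $M_q$ implies $q\le p$. An invariant $T\subset X$ is saturated if every essential solution $\gamma$ in $X$ with $\alpha(\gamma)\subset T$ and $\omega(\gamma)\subset T$ has $\operatorname{im}\gamma\subset T$. A Morse decomposition of $X$ is a Morse predecomposition all of whose members are saturated and for which some admissible preorder is a partial order. *)

theory Defs
  imports "HOL-Analysis.Analysis" "HOL-Homology.Homology"
begin

definition locally_closed_set :: "'a topology \<Rightarrow> 'a set \<Rightarrow> bool" where
  "locally_closed_set X A \<longleftrightarrow> A \<subseteq> topspace X \<and> closedin X (X closure_of A - A)"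

definition multivector_field :: "'a topology \<Rightarrow> 'a set set \<Rightarrow> bool" where
  "multivector_field X V \<longleftrightarrow>
     \<Union>V = topspace X \<and> (\<forall>v\<in>V. v \<noteq> {} \<and> locally_closed_set X v) \<and>
     (\<forall>v\<in>V. \<forall>w\<in>V. v \<noteq> w \<longrightarrow> v \<inter> w = {})"

definition mv_of :: "'a set set \<Rightarrow> 'a \<Rightarrow> 'a set" where
  "mv_of V x = (THE v. v \<in> V \<and> x \<in> v)"

definition critical_mv :: "'a topology \<Rightarrow> 'a set \<Rightarrow> bool" where
  "critical_mv X v \<longleftrightarrow>
     (\<exists>p::int. \<not> trivial_group
        (relative_homology_group p (subtopology X (X closure_of v)) (X closure_of v - v)))"

definition regular_mv :: "'a topology \<Rightarrow> 'a set \<Rightarrow> bool" where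
  "regular_mv X v \<longleftrightarrow> \<not> critical_mv X v"

definition compatible :: "'a set set \<Rightarrow> 'a set \<Rightarrow> bool" where
  "compatible V A \<longleftrightarrow> (\<exists>W\<subseteq>V. A = \<Union>W)"

definition lc_hull :: "'a topology \<Rightarrow> 'a set set \<Rightarrow> 'a set \<Rightarrow> 'a set" where
  "lc_hull X V A = \<Inter>{B. A \<subseteq> B \<and> locally_closed_set X B \<and> compatible V B}"

definition Pi_V :: "'a topology \<Rightarrow> 'a set set \<Rightarrow> 'a \<Rightarrow> 'a set" where
  "Pi_V X V x = X closure_of {x} \<union> mv_of V x"

definition Pi_V_set :: "'a topology \<Rightarrow> 'a set set \<Rightarrow> 'a set \<Rightarrow> 'a set" where
  "Pi_V_set X V S = (\<Union>x\<in>S. Pi_V X V x)"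

definition full_solution :: "'a topology \<Rightarrow> 'a set set \<Rightarrow> (int \<Rightarrow> 'a) \<Rightarrow> bool" where
  "full_solution X V \<gamma> \<longleftrightarrow>
     range \<gamma> \<subseteq> topspace X \<and> (\<forall>t. \<gamma> (t + 1) \<in> Pi_V X V (\<gamma> t))"

definition is_path :: "'a topology \<Rightarrow> 'a set set \<Rightarrow> int \<Rightarrow> int \<Rightarrow> (int \<Rightarrow> 'a) \<Rightarrow> bool" where
  "is_path X V a b \<gamma> \<longleftrightarrow>
     a \<le> b \<and> \<gamma> ` {a..b} \<subseteq> topspace X \<and> (\<forall>t\<in>{a..<b}. \<gamma> (t + 1) \<in> Pi_V X V (\<gamma> t))"

definition alpha_limit :: "'a topology \<Rightarrow> 'a set set \<Rightarrow> (int \<Rightarrow> 'a) \<Rightarrow> 'a set" where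
  "alpha_limit X V \<gamma> = lc_hull X V (\<Inter>t\<in>{..0}. \<gamma> ` {..t})"

definition omega_limit :: "'a topology \<Rightarrow> 'a set set \<Rightarrow> (int \<Rightarrow> 'a) \<Rightarrow> 'a set" where
  "omega_limit X V \<gamma> = lc_hull X V (\<Inter>t\<in>{0..}. \<gamma> ` {t..})"

definition essential :: "'a topology \<Rightarrow> 'a set set \<Rightarrow> (int \<Rightarrow> 'a) \<Rightarrow> bool" where
  "essential X V \<gamma> \<longleftrightarrow> full_solution X V \<gamma> \<and>
     \<not> (\<exists>v\<in>V. regular_mv X v \<and> alpha_limit X V \<gamma> \<subseteq> v) \<and>
     \<not> (\<exists>v\<in>V. regular_mv X v \<and> omega_limit X V \<gamma> \<subseteq> v)"

definition essential_in :: "'a topology \<Rightarrow> 'a set set \<Rightarrow> 'a set \<Rightarrow> (int \<Rightarrow> 'a) \<Rightarrow> bool" where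
  "essential_in X V A \<gamma> \<longleftrightarrow> essential X V \<gamma> \<and> range \<gamma> \<subseteq> A"

definition Inv :: "'a topology \<Rightarrow> 'a set set \<Rightarrow> 'a set \<Rightarrow> 'a set" where
  "Inv X V S = {x\<in>S. \<exists>\<gamma>. essential_in X V S \<gamma> \<and> \<gamma> 0 = x}"

definition invariant :: "'a topology \<Rightarrow> 'a set set \<Rightarrow> 'a set \<Rightarrow> bool" where
  "invariant X V S \<longleftrightarrow> Inv X V S = S"

definition isolated_invariant :: "'a topology \<Rightarrow> 'a set set \<Rightarrow> 'a set \<Rightarrow> bool" where
  "isolated_invariant X V S \<longleftrightarrow> invariant X V S \<and>
     (\<exists>N. closedin X N \<and> Pi_V_set X V S \<subseteq> N \<and>
        (\<forall>a b \<gamma>. is_path X V a b \<gamma> \<and> \<gamma> ` {a..b} \<subseteq> N \<and> \<gamma> a \<in> S \<and> \<gamma> b \<in> S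
                  \<longrightarrow> \<gamma> ` {a..b} \<subseteq> S))"

definition is_link :: "'a topology \<Rightarrow> 'a set set \<Rightarrow> (int \<Rightarrow> 'a) \<Rightarrow> 'a set \<Rightarrow> 'a set \<Rightarrow> bool" where
  "is_link X V \<gamma> S1 S2 \<longleftrightarrow> full_solution X V \<gamma> \<and>
     alpha_limit X V \<gamma> \<inter> S1 \<noteq> {} \<and> omega_limit X V \<gamma> \<inter> S2 \<noteq> {}"

definition morse_predecomposition ::
  "'a topology \<Rightarrow> 'a set set \<Rightarrow> 'p set \<Rightarrow> ('p \<Rightarrow> 'a set) \<Rightarrow> bool" where
  "morse_predecomposition X V P M \<longleftrightarrow>
     (\<forall>p\<in>P. M p \<subseteq> topspace X) \<and>
     (\<forall>p\<in>P. \<forall>q\<in>P. p \<noteq> q \<longrightarrow> M p \<inter> M q = {}) \<and>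
     (\<forall>p\<in>P. isolated_invariant X V (M p)) \<and>
     (\<forall>\<gamma>. essential_in X V (topspace X) \<gamma> \<longrightarrow>
        (\<exists>p\<in>P. \<exists>q\<in>P. is_link X V \<gamma> (M p) (M q)))"

text \<open>admissible preorder, given as a relation r on P; (q,p) \<in> r means q \<le> p\<close>
definition admissible_preorder ::
  "'a topology \<Rightarrow> 'a set set \<Rightarrow> 'p set \<Rightarrow> ('p \<Rightarrow> 'a set) \<Rightarrow> 'p rel \<Rightarrow> bool" where
  "admissible_preorder X V P M r \<longleftrightarrow> preorder_on P r \<and>
     (\<forall>p\<in>P. \<forall>q\<in>P. (\<exists>\<gamma>. is_link X V \<gamma> (M p) (M q)) \<longrightarrow> (q, p) \<in> r)"

definition saturated :: "'a topology \<Rightarrow> 'a set set \<Rightarrow> 'a set \<Rightarrow> bool" where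
  "saturated X V T \<longleftrightarrow> invariant X V T \<and>
     (\<forall>\<gamma>. essential_in X V (topspace X) \<gamma> \<and> alpha_limit X V \<gamma> \<subseteq> T \<and>
          omega_limit X V \<gamma> \<subseteq> T \<longrightarrow> range \<gamma> \<subseteq> T)"

definition morse_decomposition ::
  "'a topology \<Rightarrow> 'a set set \<Rightarrow> 'p set \<Rightarrow> ('p \<Rightarrow> 'a set) \<Rightarrow> bool" where
  "morse_decomposition X V P M \<longleftrightarrow> morse_predecomposition X V P M \<and>
     (\<forall>p\<in>P. saturated X V (M p)) \<and>
     (\<exists>r. admissible_preorder X V P M r \<and> partial_order_on P r)"

end

theory Submission
  imports Defs
begin

(* In a finite space the relation y \<in> \<Pi>(x) generates a reachability preorder, and every set
   containing the middle point of each two-step path between two of its points is locally closed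
   and V-compatible. Isolated invariant sets are of this kind, and so are the sets of points
   reaching, resp. reachable from, a given set. Hence limit sets of solutions inside an isolated
   invariant set stay inside it, and \<alpha>- and \<omega>-limit sets are strongly connected. Essential
   solutions can be concatenated along any path keeping the \<alpha>-limit of the first and the
   \<omega>-limit of the second, so a saturated isolated invariant set that meets a limit set contains
   all of it. This turns the links of a Morse decomposition into inclusions \<alpha>(\<gamma>) \<subseteq> M p,
   \<omega>(\<gamma>) \<subseteq> M q with q \<le> p, and conversely such inclusions make every partial order with this
   property admissible. Saturation is exactly what is needed to treat the case p = q, which gives
   the equivalence with (iii). *)

definition alpha_points :: "(int \<Rightarrow> 'a) \<Rightarrow> 'a set" where
  "alpha_points \<gamma> = (\<Inter>t\<in>{..0}. \<gamma> ` {..t})"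

definition omega_points :: "(int \<Rightarrow> 'a) \<Rightarrow> 'a set" where
  "omega_points \<gamma> = (\<Inter>t\<in>{0..}. \<gamma> ` {t..})"

lemma alpha_limit_eq_lc_hull: "alpha_limit X V \<gamma> = lc_hull X V (alpha_points \<gamma>)"
  unfolding alpha_limit_def alpha_points_def ..

lemma omega_limit_eq_lc_hull: "omega_limit X V \<gamma> = lc_hull X V (omega_points \<gamma>)"
  unfolding omega_limit_def omega_points_def ..

lemma mem_alpha_points_iff: "x \<in> alpha_points \<gamma> \<longleftrightarrow> (\<forall>t. \<exists>s\<le>t. \<gamma> s = x)"
proof
  assume x: "x \<in> alpha_points \<gamma>"
  show "\<forall>t. \<exists>s\<le>t. \<gamma> s = x"
  proof
    fix t :: int
    have "x \<in> \<gamma> ` {..min t 0}"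
      using x unfolding alpha_points_def by simp
    then show "\<exists>s\<le>t. \<gamma> s = x"
      by force
  qed
next
  assume "\<forall>t. \<exists>s\<le>t. \<gamma> s = x"
  then show "x \<in> alpha_points \<gamma>"
    unfolding alpha_points_def by blast
qed

lemma mem_omega_points_iff: "x \<in> omega_points \<gamma> \<longleftrightarrow> (\<forall>t. \<exists>s\<ge>t. \<gamma> s = x)"
proof
  assume x: "x \<in> omega_points \<gamma>"
  show "\<forall>t. \<exists>s\<ge>t. \<gamma> s = x"
  proof
    fix t :: int
    have "x \<in> \<gamma> ` {max t 0..}"
      using x unfolding omega_points_def by simp
    then show "\<exists>s\<ge>t. \<gamma> s = x"
      by force
  qed
next
  assume "\<forall>t. \<exists>s\<ge>t. \<gamma> s = x"
  then show "x \<in> omega_points \<gamma>"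
    unfolding omega_points_def by blast
qed

lemma alpha_points_subset_range: "alpha_points \<gamma> \<subseteq> range \<gamma>"
  unfolding alpha_points_def by blast

lemma omega_points_subset_range: "omega_points \<gamma> \<subseteq> range \<gamma>"
  unfolding omega_points_def by blast

lemma alpha_points_nonempty:
  assumes "finite (range \<gamma>)"
  shows "alpha_points \<gamma> \<noteq> {}"
proof
  assume empty: "alpha_points \<gamma> = {}"
  have "\<exists>t. \<forall>s\<le>t. \<gamma> s \<noteq> y" for y
    using empty mem_alpha_points_iff[of y \<gamma>] by auto
  then obtain g where g: "\<And>y s. s \<le> g y \<Longrightarrow> \<gamma> s \<noteq> y"
    by metis
  have "Min (g ` range \<gamma>) \<le> g (\<gamma> (Min (g ` range \<gamma>)))"
    using assms by simp
  then show False
    using g by blast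
qed

lemma omega_points_nonempty:
  assumes "finite (range \<gamma>)"
  shows "omega_points \<gamma> \<noteq> {}"
proof
  assume empty: "omega_points \<gamma> = {}"
  have "\<exists>t. \<forall>s\<ge>t. \<gamma> s \<noteq> y" for y
    using empty mem_omega_points_iff[of y \<gamma>] by auto
  then obtain g where g: "\<And>y s. g y \<le> s \<Longrightarrow> \<gamma> s \<noteq> y"
    by metis
  have "g (\<gamma> (Max (g ` range \<gamma>))) \<le> Max (g ` range \<gamma>)"
    using assms by simp
  then show False
    using g by blast
qed

lemma alpha_points_cong:
  assumes "\<And>t. t \<le> 0 \<Longrightarrow> \<delta> t = \<eta> t"
  shows "alpha_points \<delta> = alpha_points \<eta>"
proof -
  have "\<delta> ` {..t} = \<eta> ` {..t}" if "t \<le> 0" for t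
    using assms that by (intro image_cong) auto
  then show ?thesis
    unfolding alpha_points_def by (intro INF_cong) auto
qed

lemma omega_points_shift:
  assumes "\<And>t. k \<le> t \<Longrightarrow> \<delta> t = \<eta> (t - k)"
  shows "omega_points \<delta> = omega_points \<eta>"
proof -
  have "(\<forall>t. \<exists>s\<ge>t. \<delta> s = x) \<longleftrightarrow> (\<forall>t. \<exists>s\<ge>t. \<eta> s = x)" for x
  proof
    assume \<delta>: "\<forall>t. \<exists>s\<ge>t. \<delta> s = x"
    show "\<forall>t. \<exists>s\<ge>t. \<eta> s = x"
    proof
      fix t
      obtain s where "s \<ge> max (t + k) k" "\<delta> s = x"
        using \<delta> by blast
      then have "s - k \<ge> t" "\<eta> (s - k) = x"
        using assms by auto
      then show "\<exists>s\<ge>t. \<eta> s = x"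
        by blast
    qed
  next
    assume \<eta>: "\<forall>t. \<exists>s\<ge>t. \<eta> s = x"
    show "\<forall>t. \<exists>s\<ge>t. \<delta> s = x"
    proof
      fix t
      obtain s where "s \<ge> max (t - k) 0" "\<eta> s = x"
        using \<eta> by blast
      then have "s + k \<ge> t" "\<delta> (s + k) = x"
        using assms by auto
      then show "\<exists>s\<ge>t. \<delta> s = x"
        by blast
    qed
  qed
  then show ?thesis
    unfolding set_eq_iff mem_omega_points_iff by blast
qed

lemma lc_hull_least:
  "B \<subseteq> S \<Longrightarrow> locally_closed_set X S \<Longrightarrow> compatible V S \<Longrightarrow> lc_hull X V B \<subseteq> S"
  unfolding lc_hull_def by blast

lemma lc_hull_superset: "B \<subseteq> lc_hull X V B"
  unfolding lc_hull_def by blast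

lemma closure_of_finite_eq_UN:
  "finite S \<Longrightarrow> X closure_of S = (\<Union>s\<in>S. X closure_of {s})"
  using closure_of_Union[of "(\<lambda>s. {s}) ` S" X] by simp

text \<open>Convexity makes cl S - S a union of closures of its points, which is closed because the
  space is finite.\<close>

lemma locally_closed_if_specialization_convex:
  assumes fin: "finite (topspace X)" and S: "S \<subseteq> topspace X"
    and convex: "\<And>a b c. a \<in> S \<Longrightarrow> c \<in> S \<Longrightarrow> b \<in> X closure_of {c} \<Longrightarrow> a \<in> X closure_of {b}
      \<Longrightarrow> b \<in> S"
  shows "locally_closed_set X S"
proof -
  define D where "D = X closure_of S - S"
  have D_top: "D \<subseteq> topspace X"
    unfolding D_def using closure_of_subset_topspace[of X S] by blast
  have down_closed: "X closure_of {y} \<subseteq> D" if y: "y \<in> D" for y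
  proof
    fix w assume w: "w \<in> X closure_of {y}"
    obtain s where s: "s \<in> S" "y \<in> X closure_of {s}"
      using y closure_of_finite_eq_UN[of S X] finite_subset[OF S fin] unfolding D_def by auto
    have "X closure_of {y} \<subseteq> X closure_of S"
      using y closure_of_mono[of "{y}" "X closure_of S" X] unfolding D_def by simp
    then have "w \<in> X closure_of S"
      using w by blast
    moreover have "w \<notin> S"
      using convex[OF _ s(1) s(2) w] y unfolding D_def by blast
    ultimately show "w \<in> D"
      unfolding D_def by blast
  qed
  have "D = (\<Union>y\<in>D. X closure_of {y})"
  proof
    show "D \<subseteq> (\<Union>y\<in>D. X closure_of {y})"
      using D_top closure_of_subset[of "{_}" X] by fastforce
  qed (use down_closed in blast)
  moreover have "closedin X (\<Union>y\<in>D. X closure_of {y})"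
    using finite_subset[OF D_top fin] by (intro closedin_Union) auto
  ultimately show ?thesis
    unfolding locally_closed_set_def D_def using S by simp
qed

lemma full_solution_shift:
  assumes "full_solution X V \<gamma>"
  shows "full_solution X V (\<lambda>t. \<gamma> (t - k))"
proof -
  have "\<gamma> (t - k + 1) \<in> Pi_V X V (\<gamma> (t - k))" for t
    using assms unfolding full_solution_def by blast
  then show ?thesis
    using assms unfolding full_solution_def by (auto simp: algebra_simps)
qed

lemma full_solution_splice:
  assumes "full_solution X V \<gamma>\<^sub>1" "full_solution X V \<gamma>\<^sub>2" "\<gamma>\<^sub>2 1 \<in> Pi_V X V (\<gamma>\<^sub>1 0)"
  shows "full_solution X V (\<lambda>t. if t \<le> 0 then \<gamma>\<^sub>1 t else \<gamma>\<^sub>2 t)"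
  unfolding full_solution_def
proof (intro conjI allI)
  show "range (\<lambda>t. if t \<le> 0 then \<gamma>\<^sub>1 t else \<gamma>\<^sub>2 t) \<subseteq> topspace X"
    using assms(1,2) unfolding full_solution_def by auto
  fix t :: int
  consider "t < 0" | "t = 0" | "t > 0"
    by linarith
  then show "(if t + 1 \<le> 0 then \<gamma>\<^sub>1 (t + 1) else \<gamma>\<^sub>2 (t + 1)) \<in> Pi_V X V (if t \<le> 0 then \<gamma>\<^sub>1 t else \<gamma>\<^sub>2 t)"
    by cases (use assms in \<open>auto simp: full_solution_def\<close>)
qed

lemma essential_full_solution: "essential X V \<gamma> \<Longrightarrow> full_solution X V \<gamma>"
  by (simp add: essential_def)

lemma essential_in_topspace_iff: "essential_in X V (topspace X) \<gamma> \<longleftrightarrow> essential X V \<gamma>"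
  using essential_full_solution[of X V \<gamma>] unfolding essential_in_def full_solution_def by auto

lemma isolated_invariant_imp_invariant: "isolated_invariant X V S \<Longrightarrow> invariant X V S"
  by (simp add: isolated_invariant_def)

lemma invariant_obtains_essential:
  assumes "invariant X V S" "x \<in> S"
  obtains \<eta> where "essential X V \<eta>" "range \<eta> \<subseteq> S" "\<eta> 0 = x"
  using assms unfolding invariant_def Inv_def essential_in_def by blast

lemma invariant_subset_topspace:
  assumes "invariant X V S"
  shows "S \<subseteq> topspace X"
proof
  fix x assume "x \<in> S"
  then obtain \<eta> where "essential X V \<eta>" "\<eta> 0 = x"
    using assms invariant_obtains_essential by metis
  then show "x \<in> topspace X"
    using essential_full_solution[of X V \<eta>] unfolding full_solution_def by auto
qed

lemma saturated_range_subset: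
  assumes "saturated X V S" "essential X V \<gamma>" "alpha_limit X V \<gamma> \<subseteq> S" "omega_limit X V \<gamma> \<subseteq> S"
  shows "range \<gamma> \<subseteq> S"
  using assms unfolding saturated_def essential_in_topspace_iff by blast

definition mv_step :: "'a topology \<Rightarrow> 'a set set \<Rightarrow> 'a \<Rightarrow> 'a \<Rightarrow> bool" where
  "mv_step X V x y \<longleftrightarrow> x \<in> topspace X \<and> y \<in> Pi_V X V x"

locale finite_mvf =
  fixes X :: "'a topology" and V :: "'a set set"
  assumes finite_topspace: "finite (topspace X)"
    and mvf: "multivector_field X V"
begin

lemma multivectors_cover: "\<Union>V = topspace X"
  using mvf unfolding multivector_field_def by blast

lemma multivectors_disjoint: "v \<in> V \<Longrightarrow> w \<in> V \<Longrightarrow> v \<noteq> w \<Longrightarrow> v \<inter> w = {}"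
  using mvf unfolding multivector_field_def by blast

lemma mv_of_eq:
  assumes "v \<in> V" "x \<in> v"
  shows "mv_of V x = v"
  unfolding mv_of_def
proof (rule the_equality)
  show "v \<in> V \<and> x \<in> v"
    using assms by blast
  show "w = v" if "w \<in> V \<and> x \<in> w" for w
    using that assms multivectors_disjoint by blast
qed

lemma mv_of_mem:
  assumes "x \<in> topspace X"
  shows "mv_of V x \<in> V" and "x \<in> mv_of V x"
proof -
  obtain v where "v \<in> V" "x \<in> v"
    using assms multivectors_cover by blast
  then show "mv_of V x \<in> V" "x \<in> mv_of V x"
    using mv_of_eq by auto
qed

lemma mv_of_subset_topspace: "x \<in> topspace X \<Longrightarrow> mv_of V x \<subseteq> topspace X"
  using mv_of_mem(1) multivectors_cover by blast

lemma mem_Pi_V_self: "x \<in> topspace X \<Longrightarrow> x \<in> Pi_V X V x"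
  using mv_of_mem unfolding Pi_V_def by blast

lemma mv_step_topspace: "mv_step X V x y \<Longrightarrow> y \<in> topspace X"
  using mv_of_subset_topspace closure_of_subset_topspace[of X "{x}"] unfolding mv_step_def Pi_V_def
  by blast

lemma mv_step_closure_of: "b \<in> topspace X \<Longrightarrow> a \<in> X closure_of {b} \<Longrightarrow> mv_step X V b a"
  unfolding mv_step_def Pi_V_def by blast

lemma mv_step_mv_of:
  assumes "x \<in> topspace X" "w \<in> mv_of V x"
  shows "mv_step X V x w" and "mv_step X V w x"
proof -
  have "w \<in> topspace X"
    using assms mv_of_subset_topspace by blast
  moreover have "mv_of V w = mv_of V x"
    using assms mv_of_eq mv_of_mem by blast
  ultimately show "mv_step X V x w" "mv_step X V w x"
    using assms mv_of_mem unfolding mv_step_def Pi_V_def by auto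
qed

abbreviation reach :: "'a \<Rightarrow> 'a \<Rightarrow> bool" where
  "reach \<equiv> (mv_step X V)\<^sup>*\<^sup>*"

lemma reach_topspace: "reach x y \<Longrightarrow> x \<in> topspace X \<Longrightarrow> y \<in> topspace X"
  by (induction rule: rtranclp_induct) (auto dest: mv_step_topspace)

lemma full_solution_reach:
  assumes "full_solution X V \<gamma>" "s \<le> t"
  shows "reach (\<gamma> s) (\<gamma> t)"
  using assms(2)
proof (induction t rule: int_ge_induct)
  case (step t)
  have "mv_step X V (\<gamma> t) (\<gamma> (t + 1))"
    using assms(1) unfolding full_solution_def mv_step_def by auto
  with step.IH show ?case
    by (rule rtranclp.rtrancl_into_rtrancl)
qed simp

lemma lc_hull_subset_convex:
  assumes "B \<subseteq> S" "S \<subseteq> topspace X"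
    and convex: "\<And>a b c. c \<in> S \<Longrightarrow> mv_step X V c b \<Longrightarrow> mv_step X V b a \<Longrightarrow> a \<in> S \<Longrightarrow> b \<in> S"
  shows "lc_hull X V B \<subseteq> S"
proof (rule lc_hull_least[OF \<open>B \<subseteq> S\<close>])
  show "locally_closed_set X S"
    using finite_topspace \<open>S \<subseteq> topspace X\<close>
  proof (rule locally_closed_if_specialization_convex)
    fix a b c assume abc: "a \<in> S" "c \<in> S" "b \<in> X closure_of {c}" "a \<in> X closure_of {b}"
    have "c \<in> topspace X" "b \<in> topspace X"
      using abc(2,3) \<open>S \<subseteq> topspace X\<close> closure_of_subset_topspace[of X "{c}"] by blast+
    then show "b \<in> S"
      using convex[OF abc(2) mv_step_closure_of[OF _ abc(3)] mv_step_closure_of[OF _ abc(4)] abc(1)]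
      by blast
  qed
  have "S = \<Union>(mv_of V ` S)"
  proof
    show "S \<subseteq> \<Union>(mv_of V ` S)"
      using \<open>S \<subseteq> topspace X\<close> mv_of_mem by blast
    show "\<Union>(mv_of V ` S) \<subseteq> S"
    proof
      fix w assume "w \<in> \<Union>(mv_of V ` S)"
      then obtain x where x: "x \<in> S" "w \<in> mv_of V x"
        by blast
      then have "mv_step X V x w" "mv_step X V w x"
        using \<open>S \<subseteq> topspace X\<close> mv_step_mv_of by blast+
      then show "w \<in> S"
        using convex x(1) by blast
    qed
  qed
  moreover have "mv_of V ` S \<subseteq> V"
    using \<open>S \<subseteq> topspace X\<close> mv_of_mem by blast
  ultimately show "compatible V S"
    unfolding compatible_def by blast
qed

lemma lc_hull_reaches:
  assumes "A \<subseteq> topspace X" "x \<in> lc_hull X V A"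
  shows "\<exists>a\<in>A. reach x a"
proof -
  let ?S = "{z \<in> topspace X. \<exists>a\<in>A. reach z a}"
  have "lc_hull X V A \<subseteq> ?S"
  proof (rule lc_hull_subset_convex)
    show "A \<subseteq> ?S"
      using assms(1) by blast
    show "?S \<subseteq> topspace X"
      by blast
    fix a b c assume "c \<in> ?S" "mv_step X V c b" "mv_step X V b a" "a \<in> ?S"
    then obtain a' where "a' \<in> A" "reach a a'"
      by blast
    then have "reach b a'"
      using \<open>mv_step X V b a\<close> by (simp add: converse_rtranclp_into_rtranclp)
    moreover have "b \<in> topspace X"
      using \<open>mv_step X V b a\<close> unfolding mv_step_def by blast
    ultimately show "b \<in> ?S"
      using \<open>a' \<in> A\<close> by blast
  qed
  then show ?thesis
    using assms(2) by blast
qed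

lemma lc_hull_reached:
  assumes "A \<subseteq> topspace X" "x \<in> lc_hull X V A"
  shows "\<exists>a\<in>A. reach a x"
proof -
  let ?S = "{z \<in> topspace X. \<exists>a\<in>A. reach a z}"
  have "lc_hull X V A \<subseteq> ?S"
  proof (rule lc_hull_subset_convex)
    show "A \<subseteq> ?S"
      using assms(1) by blast
    show "?S \<subseteq> topspace X"
      by blast
    fix a b c assume "c \<in> ?S" "mv_step X V c b" "mv_step X V b a" "a \<in> ?S"
    then obtain a' where "a' \<in> A" "reach a' c"
      by blast
    then have "reach a' b"
      using \<open>mv_step X V c b\<close> by (simp add: rtranclp.rtrancl_into_rtrancl)
    moreover have "b \<in> topspace X"
      using \<open>mv_step X V c b\<close> by (rule mv_step_topspace)
    ultimately show "b \<in> ?S"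
      using \<open>a' \<in> A\<close> by blast
  qed
  then show ?thesis
    using assms(2) by blast
qed

lemma reach_between_lc_hulls:
  assumes "A \<subseteq> topspace X" "B \<subseteq> topspace X" "\<And>a b. a \<in> A \<Longrightarrow> b \<in> B \<Longrightarrow> reach a b"
    and "x \<in> lc_hull X V A" "y \<in> lc_hull X V B"
  shows "reach x y"
proof -
  obtain a where a: "a \<in> A" "reach x a"
    using lc_hull_reaches[OF assms(1,4)] by blast
  obtain b where b: "b \<in> B" "reach b y"
    using lc_hull_reached[OF assms(2,5)] by blast
  from a(2) assms(3)[OF a(1) b(1)] have "reach x b"
    by (rule rtranclp_trans)
  from this b(2) show ?thesis
    by (rule rtranclp_trans)
qed

lemma reach_from_alpha_points:
  assumes "full_solution X V \<gamma>" "x \<in> alpha_points \<gamma>" "y \<in> range \<gamma>"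
  shows "reach x y"
proof -
  obtain s where "\<gamma> s = y"
    using assms(3) by blast
  moreover obtain t where "t \<le> s" "\<gamma> t = x"
    using assms(2) unfolding mem_alpha_points_iff by blast
  ultimately show ?thesis
    using full_solution_reach[OF assms(1) \<open>t \<le> s\<close>] by simp
qed

lemma reach_to_omega_points:
  assumes "full_solution X V \<gamma>" "x \<in> range \<gamma>" "y \<in> omega_points \<gamma>"
  shows "reach x y"
proof -
  obtain s where "\<gamma> s = x"
    using assms(2) by blast
  moreover obtain t where "s \<le> t" "\<gamma> t = y"
    using assms(3) unfolding mem_omega_points_iff by blast
  ultimately show ?thesis
    using full_solution_reach[OF assms(1) \<open>s \<le> t\<close>] by simp
qed

lemma limit_points_subset_topspace:
  assumes "full_solution X V \<gamma>"
  shows "alpha_points \<gamma> \<subseteq> topspace X" and "omega_points \<gamma> \<subseteq> topspace X"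
  using assms alpha_points_subset_range[of \<gamma>] omega_points_subset_range[of \<gamma>]
  unfolding full_solution_def by blast+

lemma reach_within_alpha_limit:
  assumes sol: "full_solution X V \<gamma>" and "x \<in> alpha_limit X V \<gamma>" "x' \<in> alpha_limit X V \<gamma>"
  shows "reach x x'"
proof (rule reach_between_lc_hulls)
  show "reach a b" if "a \<in> alpha_points \<gamma>" "b \<in> alpha_points \<gamma>" for a b
    using that(2) alpha_points_subset_range[of \<gamma>]
    by (intro reach_from_alpha_points[OF sol that(1)]) blast
qed (use assms limit_points_subset_topspace[OF sol] in \<open>simp_all add: alpha_limit_eq_lc_hull\<close>)

lemma reach_within_omega_limit:
  assumes sol: "full_solution X V \<gamma>" and "y \<in> omega_limit X V \<gamma>" "y' \<in> omega_limit X V \<gamma>"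
  shows "reach y y'"
proof (rule reach_between_lc_hulls)
  show "reach a b" if "a \<in> omega_points \<gamma>" "b \<in> omega_points \<gamma>" for a b
    using that(1) omega_points_subset_range[of \<gamma>]
    by (intro reach_to_omega_points[OF sol _ that(2)]) blast
qed (use assms limit_points_subset_topspace[OF sol] in \<open>simp_all add: omega_limit_eq_lc_hull\<close>)

lemma reach_alpha_limit_omega_limit:
  assumes sol: "full_solution X V \<gamma>" and "x \<in> alpha_limit X V \<gamma>" "y \<in> omega_limit X V \<gamma>"
  shows "reach x y"
proof (rule reach_between_lc_hulls)
  show "reach a b" if "a \<in> alpha_points \<gamma>" "b \<in> omega_points \<gamma>" for a b
    using that(2) omega_points_subset_range[of \<gamma>]
    by (intro reach_from_alpha_points[OF sol that(1)]) blast
qed (use assms limit_points_subset_topspace[OF sol] in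
    \<open>simp_all add: alpha_limit_eq_lc_hull omega_limit_eq_lc_hull\<close>)

lemma limit_sets_nonempty:
  assumes "full_solution X V \<gamma>"
  shows "alpha_limit X V \<gamma> \<noteq> {}" and "omega_limit X V \<gamma> \<noteq> {}"
proof -
  have "finite (range \<gamma>)"
    using assms finite_subset[OF _ finite_topspace] unfolding full_solution_def by blast
  then show "alpha_limit X V \<gamma> \<noteq> {}" "omega_limit X V \<gamma> \<noteq> {}"
    unfolding alpha_limit_eq_lc_hull omega_limit_eq_lc_hull
    using alpha_points_nonempty omega_points_nonempty
      lc_hull_superset[of "alpha_points \<gamma>" X V] lc_hull_superset[of "omega_points \<gamma>" X V]
    by blast+
qed

text \<open>An isolating neighbourhood contains the two-step path c, b, a, since b \<in> \<Pi>(c) and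
  S \<subseteq> \<Pi>(S).\<close>

lemma isolated_invariant_convex:
  assumes iso: "isolated_invariant X V S" and "c \<in> S" "mv_step X V c b" "mv_step X V b a" "a \<in> S"
  shows "b \<in> S"
proof -
  obtain N where N: "Pi_V_set X V S \<subseteq> N"
    "\<forall>a b \<gamma>. is_path X V a b \<gamma> \<and> \<gamma> ` {a..b} \<subseteq> N \<and> \<gamma> a \<in> S \<and> \<gamma> b \<in> S \<longrightarrow> \<gamma> ` {a..b} \<subseteq> S"
    using iso unfolding isolated_invariant_def by blast
  have c: "c \<in> topspace X" "b \<in> Pi_V X V c"
    using assms(3) unfolding mv_step_def by blast+
  have a: "a \<in> topspace X" "a \<in> Pi_V X V b"
    using assms(4) mv_step_topspace unfolding mv_step_def by blast+
  have "Pi_V X V c \<subseteq> N" "Pi_V X V a \<subseteq> N"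
    using N(1) \<open>c \<in> S\<close> \<open>a \<in> S\<close> unfolding Pi_V_set_def by blast+
  then have "{c, b, a} \<subseteq> N"
    using mem_Pi_V_self[OF c(1)] mem_Pi_V_self[OF a(1)] c(2) by blast
  define g where "g = (\<lambda>t::int. if t = 0 then c else if t = 1 then b else a)"
  have "{0..2::int} = {0, 1, 2}" "{0..<2::int} = {0, 1}"
    by auto
  then have g_image: "g ` {0..2} = {c, b, a}"
    by (auto simp: g_def)
  have "is_path X V 0 2 g"
    using c a mv_step_topspace[OF assms(3)] \<open>{0..<2} = {0, 1}\<close>
    unfolding is_path_def g_image by (simp add: g_def)
  moreover have "g ` {0..2} \<subseteq> N" "g 0 \<in> S" "g 2 \<in> S"
    using \<open>{c, b, a} \<subseteq> N\<close> assms(2,5) unfolding g_image by (simp_all add: g_def)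
  ultimately have "g ` {0..2} \<subseteq> S"
    using N(2) by blast
  then show "b \<in> S"
    unfolding g_image by blast
qed

lemma limit_sets_subset_isolated_invariant:
  assumes iso: "isolated_invariant X V S" and "range \<eta> \<subseteq> S"
  shows "alpha_limit X V \<eta> \<subseteq> S" and "omega_limit X V \<eta> \<subseteq> S"
proof -
  have "S \<subseteq> topspace X"
    by (rule invariant_subset_topspace[OF isolated_invariant_imp_invariant[OF iso]])
  have hull: "lc_hull X V B \<subseteq> S" if "B \<subseteq> S" for B
    by (rule lc_hull_subset_convex[OF that \<open>S \<subseteq> topspace X\<close> isolated_invariant_convex[OF iso]])
  show "alpha_limit X V \<eta> \<subseteq> S"
    unfolding alpha_limit_eq_lc_hull
    using alpha_points_subset_range[of \<eta>] assms(2) by (intro hull) blast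
  show "omega_limit X V \<eta> \<subseteq> S"
    unfolding omega_limit_eq_lc_hull
    using omega_points_subset_range[of \<eta>] assms(2) by (intro hull) blast
qed

lemma full_solution_const: "x \<in> topspace X \<Longrightarrow> full_solution X V (\<lambda>_. x)"
  unfolding full_solution_def using mem_Pi_V_self by auto

text \<open>The path is prepended to the second solution one step at a time, and the new first point
  is extended constantly into the past, which is a solution because x \<in> \<Pi>(x).\<close>

lemma reach_connects_solutions:
  assumes "reach (\<eta>\<^sub>1 0) y" "full_solution X V \<eta>\<^sub>1" "full_solution X V \<eta>\<^sub>2" "\<eta>\<^sub>2 0 = y"
  shows "\<exists>\<delta> k. full_solution X V \<delta> \<and> (\<forall>t\<le>0. \<delta> t = \<eta>\<^sub>1 t) \<and> (\<forall>t\<ge>k. \<delta> t = \<eta>\<^sub>2 (t - k))"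
  using assms(1,3,4)
proof (induction arbitrary: \<eta>\<^sub>2 rule: rtranclp_induct)
  case base
  let ?\<delta> = "\<lambda>t. if t \<le> 0 then \<eta>\<^sub>1 t else \<eta>\<^sub>2 t"
  have "\<eta>\<^sub>2 (0 + 1) \<in> Pi_V X V (\<eta>\<^sub>2 0)"
    using base(1) unfolding full_solution_def by blast
  then have "full_solution X V ?\<delta>"
    using base(2) by (intro full_solution_splice[OF assms(2) base(1)]) simp
  moreover have "\<forall>t\<ge>0. ?\<delta> t = \<eta>\<^sub>2 (t - 0)"
    using base(2) by auto
  ultimately show ?case
    by (intro exI[of _ ?\<delta>] exI[of _ 0]) simp
next
  case (step y y')
  let ?\<eta> = "\<lambda>t. if t \<le> 0 then y else \<eta>\<^sub>2 (t - 1)"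
  have "y \<in> topspace X" "\<eta>\<^sub>2 (1 - 1) \<in> Pi_V X V y"
    using step(2,5) unfolding mv_step_def by auto
  then have "full_solution X V ?\<eta>"
    by (intro full_solution_splice full_solution_const full_solution_shift[OF step(4)]) auto
  then obtain \<delta> k where \<delta>: "full_solution X V \<delta>" "\<forall>t\<le>0. \<delta> t = \<eta>\<^sub>1 t" "\<forall>t\<ge>k. \<delta> t = ?\<eta> (t - k)"
    using step.IH[of ?\<eta>] by auto
  then have "\<forall>t\<ge>k + 1. \<delta> t = \<eta>\<^sub>2 (t - (k + 1))"
    by (auto simp: algebra_simps)
  with \<delta>(1,2) show ?case
    by (intro exI[of _ \<delta>] exI[of _ "k + 1"]) simp
qed

lemma essential_solution_through:
  assumes \<eta>\<^sub>1: "essential X V \<eta>\<^sub>1" and \<eta>\<^sub>2: "essential X V \<eta>\<^sub>2"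
    and "reach (\<eta>\<^sub>1 0) z" "reach z (\<eta>\<^sub>2 0)"
  obtains \<delta> where "essential X V \<delta>" "z \<in> range \<delta>"
    "alpha_limit X V \<delta> = alpha_limit X V \<eta>\<^sub>1" "omega_limit X V \<delta> = omega_limit X V \<eta>\<^sub>2"
proof -
  have sol: "full_solution X V \<eta>\<^sub>1" "full_solution X V \<eta>\<^sub>2"
    using essential_full_solution[OF \<eta>\<^sub>1] essential_full_solution[OF \<eta>\<^sub>2] .
  then have "z \<in> topspace X"
    using reach_topspace[OF assms(3)] unfolding full_solution_def by blast
  have "\<exists>\<zeta> k. full_solution X V \<zeta> \<and> (\<forall>t\<le>0. \<zeta> t = z) \<and> (\<forall>t\<ge>k. \<zeta> t = \<eta>\<^sub>2 (t - k))"
    using reach_connects_solutions[OF _ full_solution_const[OF \<open>z \<in> topspace X\<close>] sol(2) refl] assms(4)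
    by simp
  then obtain \<zeta> k where \<zeta>: "full_solution X V \<zeta>" "\<forall>t\<le>0. \<zeta> t = z" "\<forall>t\<ge>k. \<zeta> t = \<eta>\<^sub>2 (t - k)"
    by blast
  have "\<zeta> 0 = z"
    using \<zeta>(2) by simp
  then obtain \<delta> l where \<delta>: "full_solution X V \<delta>" "\<forall>t\<le>0. \<delta> t = \<eta>\<^sub>1 t" "\<forall>t\<ge>l. \<delta> t = \<zeta> (t - l)"
    using reach_connects_solutions[OF assms(3) sol(1) \<zeta>(1)] by auto
  have "\<delta> l = z"
    using \<delta>(3) \<zeta>(2) by simp
  then have "z \<in> range \<delta>"
    by (metis rangeI)
  have "alpha_points \<delta> = alpha_points \<eta>\<^sub>1"
    by (rule alpha_points_cong) (use \<delta>(2) in blast)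
  then have \<alpha>: "alpha_limit X V \<delta> = alpha_limit X V \<eta>\<^sub>1"
    unfolding alpha_limit_eq_lc_hull by simp
  have "omega_points \<delta> = omega_points \<zeta>"
    by (rule omega_points_shift) (use \<delta>(3) in blast)
  moreover have "omega_points \<zeta> = omega_points \<eta>\<^sub>2"
    by (rule omega_points_shift) (use \<zeta>(3) in blast)
  ultimately have \<omega>: "omega_limit X V \<delta> = omega_limit X V \<eta>\<^sub>2"
    unfolding omega_limit_eq_lc_hull by simp
  have "essential X V \<delta>"
    using \<eta>\<^sub>1 \<eta>\<^sub>2 \<delta>(1) unfolding essential_def \<alpha> \<omega> by simp
  then show thesis
    using \<open>z \<in> range \<delta>\<close> \<alpha> \<omega> by (rule that)
qed

lemma saturated_absorbs_reach_connected:
  assumes sat: "saturated X V S" and iso: "isolated_invariant X V S"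
    and connected: "\<And>x z. x \<in> L \<Longrightarrow> z \<in> L \<Longrightarrow> reach x z" and "x \<in> L" "x \<in> S"
  shows "L \<subseteq> S"
proof
  fix z assume "z \<in> L"
  obtain \<eta> where \<eta>: "essential X V \<eta>" "range \<eta> \<subseteq> S" "\<eta> 0 = x"
    by (rule invariant_obtains_essential[OF isolated_invariant_imp_invariant[OF iso] \<open>x \<in> S\<close>])
  have "reach (\<eta> 0) z" "reach z (\<eta> 0)"
    using connected[OF \<open>x \<in> L\<close> \<open>z \<in> L\<close>] connected[OF \<open>z \<in> L\<close> \<open>x \<in> L\<close>] \<eta>(3) by simp_all
  then obtain \<sigma> where \<sigma>: "essential X V \<sigma>" "z \<in> range \<sigma>"
    "alpha_limit X V \<sigma> = alpha_limit X V \<eta>" "omega_limit X V \<sigma> = omega_limit X V \<eta>"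
    by (rule essential_solution_through[OF \<eta>(1) \<eta>(1)])
  have "alpha_limit X V \<sigma> \<subseteq> S" "omega_limit X V \<sigma> \<subseteq> S"
    using limit_sets_subset_isolated_invariant[OF iso \<eta>(2)] \<sigma>(3,4) by simp_all
  then have "range \<sigma> \<subseteq> S"
    using saturated_range_subset[OF sat \<sigma>(1)] by blast
  then show "z \<in> S"
    using \<sigma>(2) by blast
qed

end

definition limits_descend :: "'a topology \<Rightarrow> 'a set set \<Rightarrow> 'p set \<Rightarrow> ('p \<Rightarrow> 'a set) \<Rightarrow> 'p rel \<Rightarrow> bool"
  where "limits_descend X V P M r \<longleftrightarrow>
    (\<forall>\<gamma>. essential_in X V (topspace X) \<gamma> \<longrightarrow>
       (\<exists>p\<in>P. \<exists>q\<in>P. (q, p) \<in> r \<and> alpha_limit X V \<gamma> \<subseteq> M p \<and> omega_limit X V \<gamma> \<subseteq> M q))"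

definition limits_descend_strictly ::
  "'a topology \<Rightarrow> 'a set set \<Rightarrow> 'p set \<Rightarrow> ('p \<Rightarrow> 'a set) \<Rightarrow> 'p rel \<Rightarrow> bool"
  where "limits_descend_strictly X V P M r \<longleftrightarrow>
    (\<forall>\<gamma>. essential_in X V (topspace X) \<gamma> \<longrightarrow>
       (\<exists>p\<in>P. range \<gamma> \<subseteq> M p) \<or>
       (\<exists>p\<in>P. \<exists>q\<in>P. (q, p) \<in> r \<and> q \<noteq> p \<and> alpha_limit X V \<gamma> \<subseteq> M p \<and> omega_limit X V \<gamma> \<subseteq> M q))"

locale finite_mvf_family = finite_mvf +
  fixes P :: "'p set" and M :: "'p \<Rightarrow> 'a set"
  assumes M_subset_topspace: "\<forall>p\<in>P. M p \<subseteq> topspace X"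
    and M_disjoint: "\<forall>p\<in>P. \<forall>q\<in>P. p \<noteq> q \<longrightarrow> M p \<inter> M q = {}"
begin

lemma M_index_unique: "p \<in> P \<Longrightarrow> q \<in> P \<Longrightarrow> A \<noteq> {} \<Longrightarrow> A \<subseteq> M p \<Longrightarrow> A \<subseteq> M q \<Longrightarrow> p = q"
  using M_disjoint by blast

lemma morse_decomposition_limits_descend:
  assumes md: "morse_decomposition X V P M" and adm: "admissible_preorder X V P M r"
  shows "limits_descend X V P M r"
  unfolding limits_descend_def
proof (intro allI impI)
  fix \<gamma> assume \<gamma>: "essential_in X V (topspace X) \<gamma>"
  then have sol: "full_solution X V \<gamma>"
    unfolding essential_in_topspace_iff by (rule essential_full_solution)
  have sat: "\<forall>p\<in>P. saturated X V (M p)" and iso: "\<forall>p\<in>P. isolated_invariant X V (M p)"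
    and links: "\<forall>\<gamma>. essential_in X V (topspace X) \<gamma> \<longrightarrow> (\<exists>p\<in>P. \<exists>q\<in>P. is_link X V \<gamma> (M p) (M q))"
    using md by (simp_all add: morse_decomposition_def morse_predecomposition_def)
  then obtain p q where p: "p \<in> P" and q: "q \<in> P" and link: "is_link X V \<gamma> (M p) (M q)"
    using \<gamma> by blast
  have "\<forall>p\<in>P. \<forall>q\<in>P. (\<exists>\<gamma>. is_link X V \<gamma> (M p) (M q)) \<longrightarrow> (q, p) \<in> r"
    using adm by (simp add: admissible_preorder_def)
  then have "(q, p) \<in> r"
    using p q link by blast
  obtain x y where x: "x \<in> alpha_limit X V \<gamma>" "x \<in> M p" and y: "y \<in> omega_limit X V \<gamma>" "y \<in> M q"
    using link unfolding is_link_def by blast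
  have "alpha_limit X V \<gamma> \<subseteq> M p"
    using sat iso p saturated_absorbs_reach_connected[OF _ _ reach_within_alpha_limit[OF sol] x] by blast
  moreover have "omega_limit X V \<gamma> \<subseteq> M q"
    using sat iso q saturated_absorbs_reach_connected[OF _ _ reach_within_omega_limit[OF sol] y] by blast
  ultimately show "\<exists>p\<in>P. \<exists>q\<in>P. (q, p) \<in> r \<and> alpha_limit X V \<gamma> \<subseteq> M p \<and> omega_limit X V \<gamma> \<subseteq> M q"
    using p q \<open>(q, p) \<in> r\<close> by blast
qed

lemma limits_descend_predecomposition:
  assumes iso: "\<forall>p\<in>P. isolated_invariant X V (M p)" and desc: "limits_descend X V P M r"
  shows "morse_predecomposition X V P M"
  unfolding morse_predecomposition_def
proof (intro conjI allI impI)
  fix \<gamma> assume \<gamma>: "essential_in X V (topspace X) \<gamma>"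
  then have sol: "full_solution X V \<gamma>"
    unfolding essential_in_topspace_iff by (rule essential_full_solution)
  obtain p q where "p \<in> P" "q \<in> P" "alpha_limit X V \<gamma> \<subseteq> M p" "omega_limit X V \<gamma> \<subseteq> M q"
    using desc \<gamma> unfolding limits_descend_def by blast
  then show "\<exists>p\<in>P. \<exists>q\<in>P. is_link X V \<gamma> (M p) (M q)"
    unfolding is_link_def using sol limit_sets_nonempty[OF sol] by blast
qed (use M_subset_topspace M_disjoint iso in auto)

text \<open>The link is spliced with essential solutions inside M p and M q; the resulting essential
  solution has its limit sets in M p and M q, so the hypothesis forces (q, p) \<in> r.\<close>

lemma limits_descend_admissible:
  assumes iso: "\<forall>p\<in>P. isolated_invariant X V (M p)" and desc: "limits_descend X V P M r"
    and "preorder_on P r"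
  shows "admissible_preorder X V P M r"
  unfolding admissible_preorder_def
proof (intro conjI ballI impI)
  fix p q assume p: "p \<in> P" and q: "q \<in> P" and "\<exists>\<gamma>. is_link X V \<gamma> (M p) (M q)"
  then obtain \<gamma> x y where sol: "full_solution X V \<gamma>"
    and x: "x \<in> alpha_limit X V \<gamma>" "x \<in> M p" and y: "y \<in> omega_limit X V \<gamma>" "y \<in> M q"
    unfolding is_link_def by blast
  have iso_pq: "isolated_invariant X V (M p)" "isolated_invariant X V (M q)"
    using iso p q by blast+
  obtain \<eta> where \<eta>: "essential X V \<eta>" "range \<eta> \<subseteq> M p" "\<eta> 0 = x"
    by (rule invariant_obtains_essential[OF isolated_invariant_imp_invariant[OF iso_pq(1)] x(2)])
  obtain \<zeta> where \<zeta>: "essential X V \<zeta>" "range \<zeta> \<subseteq> M q" "\<zeta> 0 = y"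
    by (rule invariant_obtains_essential[OF isolated_invariant_imp_invariant[OF iso_pq(2)] y(2)])
  have "reach (\<eta> 0) x" "reach x (\<zeta> 0)"
    using reach_alpha_limit_omega_limit[OF sol x(1) y(1)] \<eta>(3) \<zeta>(3) by simp_all
  then obtain \<delta> where \<delta>: "essential X V \<delta>"
    "alpha_limit X V \<delta> = alpha_limit X V \<eta>" "omega_limit X V \<delta> = omega_limit X V \<zeta>"
    by (rule essential_solution_through[OF \<eta>(1) \<zeta>(1)])
  obtain p' q' where pq': "p' \<in> P" "q' \<in> P" "(q', p') \<in> r"
    "alpha_limit X V \<delta> \<subseteq> M p'" "omega_limit X V \<delta> \<subseteq> M q'"
    using desc \<delta>(1) unfolding limits_descend_def essential_in_topspace_iff by blast
  have "alpha_limit X V \<delta> \<subseteq> M p" "omega_limit X V \<delta> \<subseteq> M q"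
    using limit_sets_subset_isolated_invariant[OF iso_pq(1) \<eta>(2)]
      limit_sets_subset_isolated_invariant[OF iso_pq(2) \<zeta>(2)] \<delta>(2,3) by simp_all
  moreover have "alpha_limit X V \<delta> \<noteq> {}" "omega_limit X V \<delta> \<noteq> {}"
    using limit_sets_nonempty[OF essential_full_solution[OF \<delta>(1)]] by simp_all
  ultimately have "p' = p" "q' = q"
    using M_index_unique[OF pq'(1) p _ pq'(4)] M_index_unique[OF pq'(2) q _ pq'(5)] by blast+
  then show "(q, p) \<in> r"
    using pq'(3) by simp
qed (rule assms(3))

lemma morse_decomposition_iff_limits_descend:
  "morse_decomposition X V P M \<longleftrightarrow>
     (\<forall>p\<in>P. saturated X V (M p) \<and> isolated_invariant X V (M p)) \<and>
     (\<exists>r. partial_order_on P r \<and> limits_descend X V P M r)"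
proof
  assume md: "morse_decomposition X V P M"
  then obtain r where "admissible_preorder X V P M r" "partial_order_on P r"
    unfolding morse_decomposition_def by blast
  moreover have "\<forall>p\<in>P. saturated X V (M p) \<and> isolated_invariant X V (M p)"
    using md unfolding morse_decomposition_def morse_predecomposition_def by blast
  ultimately show "(\<forall>p\<in>P. saturated X V (M p) \<and> isolated_invariant X V (M p)) \<and>
      (\<exists>r. partial_order_on P r \<and> limits_descend X V P M r)"
    using morse_decomposition_limits_descend[OF md] by blast
next
  assume "(\<forall>p\<in>P. saturated X V (M p) \<and> isolated_invariant X V (M p)) \<and>
      (\<exists>r. partial_order_on P r \<and> limits_descend X V P M r)"
  then obtain r where sat: "\<forall>p\<in>P. saturated X V (M p)" and iso: "\<forall>p\<in>P. isolated_invariant X V (M p)"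
    and r: "partial_order_on P r" "limits_descend X V P M r"
    by blast
  have "preorder_on P r"
    using r(1) unfolding partial_order_on_def by blast
  then show "morse_decomposition X V P M"
    unfolding morse_decomposition_def
    using limits_descend_predecomposition[OF iso r(2)] limits_descend_admissible[OF iso r(2)] sat r(1)
    by blast
qed

lemma limits_descend_strictly_if_saturated:
  assumes "\<forall>p\<in>P. saturated X V (M p)" "limits_descend X V P M r"
  shows "limits_descend_strictly X V P M r"
  unfolding limits_descend_strictly_def
proof (intro allI impI)
  fix \<gamma> assume \<gamma>: "essential_in X V (topspace X) \<gamma>"
  then obtain p q where pq: "p \<in> P" "q \<in> P" "(q, p) \<in> r"
    "alpha_limit X V \<gamma> \<subseteq> M p" "omega_limit X V \<gamma> \<subseteq> M q"
    using assms(2) unfolding limits_descend_def by blast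
  show "(\<exists>p\<in>P. range \<gamma> \<subseteq> M p) \<or> (\<exists>p\<in>P. \<exists>q\<in>P. (q, p) \<in> r \<and> q \<noteq> p \<and>
    alpha_limit X V \<gamma> \<subseteq> M p \<and> omega_limit X V \<gamma> \<subseteq> M q)"
  proof (cases "q = p")
    case True
    then have "range \<gamma> \<subseteq> M p"
      using saturated_range_subset[OF _ \<gamma>[unfolded essential_in_topspace_iff]] assms(1) pq by blast
    then show ?thesis
      using pq(1) by blast
  qed (use pq in blast)
qed

lemma limits_descend_if_strictly:
  assumes iso: "\<forall>p\<in>P. isolated_invariant X V (M p)" and "refl_on P r"
    and "limits_descend_strictly X V P M r"
  shows "limits_descend X V P M r"
  unfolding limits_descend_def
proof (intro allI impI)
  fix \<gamma> assume \<gamma>: "essential_in X V (topspace X) \<gamma>"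
  with assms(3) consider p where "p \<in> P" "range \<gamma> \<subseteq> M p"
    | "\<exists>p\<in>P. \<exists>q\<in>P. (q, p) \<in> r \<and> alpha_limit X V \<gamma> \<subseteq> M p \<and> omega_limit X V \<gamma> \<subseteq> M q"
    unfolding limits_descend_strictly_def by blast
  then show "\<exists>p\<in>P. \<exists>q\<in>P. (q, p) \<in> r \<and> alpha_limit X V \<gamma> \<subseteq> M p \<and> omega_limit X V \<gamma> \<subseteq> M q"
  proof cases
    case 1
    then have "alpha_limit X V \<gamma> \<subseteq> M p" "omega_limit X V \<gamma> \<subseteq> M p"
      using iso limit_sets_subset_isolated_invariant[of "M p" \<gamma>] by blast+
    then show ?thesis
      using 1(1) refl_onD[OF assms(2) 1(1)] by blast
  qed
qed

lemma saturated_if_limits_descend_strictly: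
  assumes iso: "\<forall>p\<in>P. isolated_invariant X V (M p)" and desc: "limits_descend_strictly X V P M r"
    and p: "p \<in> P"
  shows "saturated X V (M p)"
  unfolding saturated_def
proof (intro conjI allI impI)
  show "invariant X V (M p)"
    using iso p isolated_invariant_imp_invariant by blast
  fix \<gamma> assume \<gamma>: "essential_in X V (topspace X) \<gamma> \<and>
    alpha_limit X V \<gamma> \<subseteq> M p \<and> omega_limit X V \<gamma> \<subseteq> M p"
  then have "essential X V \<gamma>"
    unfolding essential_in_topspace_iff by blast
  then have nonempty: "alpha_limit X V \<gamma> \<noteq> {}" "omega_limit X V \<gamma> \<noteq> {}"
    using limit_sets_nonempty[OF essential_full_solution] by blast+
  have "(\<exists>p'\<in>P. range \<gamma> \<subseteq> M p') \<or> (\<exists>p'\<in>P. \<exists>q'\<in>P. (q', p') \<in> r \<and> q' \<noteq> p' \<and>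
      alpha_limit X V \<gamma> \<subseteq> M p' \<and> omega_limit X V \<gamma> \<subseteq> M q')"
    by (rule desc[unfolded limits_descend_strictly_def, rule_format]) (use \<gamma> in blast)
  then consider p' where "p' \<in> P" "range \<gamma> \<subseteq> M p'"
    | p' q' where "p' \<in> P" "q' \<in> P" "q' \<noteq> p'"
      "alpha_limit X V \<gamma> \<subseteq> M p'" "omega_limit X V \<gamma> \<subseteq> M q'"
    by blast
  then show "range \<gamma> \<subseteq> M p"
  proof cases
    case 1
    then have "alpha_limit X V \<gamma> \<subseteq> M p'"
      using iso limit_sets_subset_isolated_invariant(1)[of "M p'" \<gamma>] by blast
    then show ?thesis
      using 1 M_index_unique[OF 1(1) p nonempty(1)] \<gamma> by blast
  next
    case 2
    then show ?thesis
      using M_index_unique[OF 2(1) p nonempty(1)] M_index_unique[OF 2(2) p nonempty(2)] \<gamma> by blast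
  qed
qed

lemma morse_decomposition_iff_limits_descend_strictly:
  "morse_decomposition X V P M \<longleftrightarrow>
     (\<forall>p\<in>P. isolated_invariant X V (M p)) \<and>
     (\<exists>r. partial_order_on P r \<and> limits_descend_strictly X V P M r)"
proof
  assume "morse_decomposition X V P M"
  then show "(\<forall>p\<in>P. isolated_invariant X V (M p)) \<and>
      (\<exists>r. partial_order_on P r \<and> limits_descend_strictly X V P M r)"
    unfolding morse_decomposition_iff_limits_descend using limits_descend_strictly_if_saturated by blast
next
  assume "(\<forall>p\<in>P. isolated_invariant X V (M p)) \<and>
      (\<exists>r. partial_order_on P r \<and> limits_descend_strictly X V P M r)"
  then obtain r where iso: "\<forall>p\<in>P. isolated_invariant X V (M p)"
    and r: "partial_order_on P r" "limits_descend_strictly X V P M r"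
    by blast
  then show "morse_decomposition X V P M"
    unfolding morse_decomposition_iff_limits_descend
    using limits_descend_if_strictly[OF iso partial_order_onD(1)[OF r(1)] r(2)]
      saturated_if_limits_descend_strictly[OF iso r(2)] by blast
qed

end

theorem theorem4p11:
  fixes X :: "'a topology" and V :: "'a set set" and P :: "'p set" and M :: "'p \<Rightarrow> 'a set"
  assumes "finite (topspace X)" and "t0_space X"
    and "multivector_field X V"
    and "invariant X V (topspace X)"
    and "\<forall>p\<in>P. M p \<subseteq> topspace X"
    and "\<forall>p\<in>P. \<forall>q\<in>P. p \<noteq> q \<longrightarrow> M p \<inter> M q = {}"
  shows "(morse_decomposition X V P M \<longleftrightarrow>
           (\<forall>p\<in>P. saturated X V (M p) \<and> isolated_invariant X V (M p)) \<and>
           (\<exists>r. partial_order_on P r \<and>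
              (\<forall>\<gamma>. essential_in X V (topspace X) \<gamma> \<longrightarrow>
                 (\<exists>p\<in>P. \<exists>q\<in>P. (q, p) \<in> r \<and>
                    alpha_limit X V \<gamma> \<subseteq> M p \<and> omega_limit X V \<gamma> \<subseteq> M q))))
       \<and> (morse_decomposition X V P M \<longleftrightarrow>
           (\<forall>p\<in>P. isolated_invariant X V (M p)) \<and>
           (\<exists>r. partial_order_on P r \<and>
              (\<forall>\<gamma>. essential_in X V (topspace X) \<gamma> \<longrightarrow>
                 (\<exists>p\<in>P. range \<gamma> \<subseteq> M p) \<or>
                 (\<exists>p\<in>P. \<exists>q\<in>P. (q, p) \<in> r \<and> q \<noteq> p \<and>
                    alpha_limit X V \<gamma> \<subseteq> M p \<and> omega_limit X V \<gamma> \<subseteq> M q))))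
       \<and> (morse_decomposition X V P M \<longrightarrow>
           (\<forall>p\<in>P. saturated X V (M p) \<and> isolated_invariant X V (M p)))"
proof -
  interpret finite_mvf_family X V P M
    using assms by unfold_locales auto
  show ?thesis
    unfolding limits_descend_def[symmetric] limits_descend_strictly_def[symmetric]
    using morse_decomposition_iff_limits_descend morse_decomposition_iff_limits_descend_strictly
    by blast
qed

end
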